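(* Let $(\mathcal{S},\mathcal{A},\mathbb{P},\mathbb{T})$ be a Controlled Markov Process, let $s_0\in\mathcal{S}$, and let $\succsim_1,\succsim_2$ be two preference relations over lotteries of finite trajectories of this CMP, each satisfying the VNM axioms and the additivity axiom. If $\succsim_1$ and $\succsim_2$ agree on all pairs of lotteries that start from $s_0$, then they agree on all pairs of lotteries of trajectories that start from states reachable from $s_0$ (a state $s$ is reachable from $s_0$ if there is a finite trajectory from $s_0$ to $s$). That is, the preferences over lotteries starting from $s_0$ uniquely determine all preferences over lotteries of trajectories reachable from $s_0$.
   Context: A CMP is a tuple $(\mathcal{S},\mathcal{A},\mathbb{P},\mathbb{T})$: $\mathcal{S}$ a countable state set, $\mathcal{A}$ an action set, $\mathbb{P}:\mathcal{S}\times\mathcal{A}\to\mathcal{D}(\mathcal{S})\cup\{0\}$ transition distributions ($0$ = illegal), $\mathbb{T}:\mathcal{S}\times\mathcal{A}\times\mathcal{S}\to[0,1]$ termination probabilities. A transition is a triple $(s,a,s')$; a trajectory of length $n\ge1$ is a sequence $\langle(s_i,a_i,s_i')\rangle_{i=1}^n$ of transitions of the CMP with $s_i'=s_{i+1}$, starting at $s_1$ and ending at $s_n'$; for each state $s$, $\epsilon_s$ is the empty trajectory at $s$. Outcomes are the finite trajectories; a lottery is a probability distribution over outcomes, compound lotteries being identified with their reductions. A lottery starts from $s$ if supported on trajectories starting at $s$. Concatenation $\tau\cdot\tau'$ (for $\tau$ ending where $\tau'$ starts) is extended to lotteries by distributing over mixtures. VNM axioms on a preference relation $\succsim$ over lotteries: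 completeness; transitivity; continuity (if $L\succsim M\succsim N$, some $p\in[0,1]$ gives $pL+(1-p)N\approx M$); independence (for all $L,M,N$ and $p\in[0,1)$, $L\succsim M\iff(1-p)L+pN\succsim(1-p)M+pN$). Additivity axiom: for all states $s$, trajectories $\tau_1,\tau_2$ ending at $s$, lotteries $L,M$ starting from $s$, lotteries $N,K$, and $p\in[0,1]$: $p(\tau_1\cdot L)+(1-p)N\succsim p(\tau_1\cdot M)+(1-p)K\iff p(\tau_2\cdot L)+(1-p)N\succsim p(\tau_2\cdot M)+(1-p)K$. *)

theory Defs
  imports "HOL-Probability.Probability"
begin

text \<open>A Controlled Markov Process with countable state type 's and action type 'a
 (the action set is the whole type 'a).  The transition function returns None for
 an illegal action (the "0" of the paper), and Some d for a distribution d over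
 next states.  T gives termination probabilities.\<close>

type_synonym ('s, 'a) transition = "'s \<times> 'a \<times> 's"

definition cmp :: "('s::countable \<Rightarrow> 'a \<Rightarrow> 's pmf option) \<Rightarrow> ('s \<Rightarrow> 'a \<Rightarrow> 's \<Rightarrow> real) \<Rightarrow> bool" where
  "cmp P T \<longleftrightarrow> (\<forall>s a s'. 0 \<le> T s a s' \<and> T s a s' \<le> 1)"

definition is_transition :: "('s \<Rightarrow> 'a \<Rightarrow> 's pmf option) \<Rightarrow> ('s, 'a) transition \<Rightarrow> bool" where
  "is_transition P tr = (case tr of (s, a, s') \<Rightarrow>
      (\<exists>d. P s a = Some d \<and> s' \<in> set_pmf d))"

text \<open>A (finite) trajectory: a start state together with a list of transitions.
 The pair (s, []) is the empty trajectory \<epsilon>_s.\<close>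
type_synonym ('s, 'a) traj = "'s \<times> ('s, 'a) transition list"

fun chain_from :: "'s \<Rightarrow> ('s, 'a) transition list \<Rightarrow> bool" where
  "chain_from s [] = True"
| "chain_from s ((s1, a, s1') # rest) = (s1 = s \<and> chain_from s1' rest)"

definition valid_traj :: "('s \<Rightarrow> 'a \<Rightarrow> 's pmf option) \<Rightarrow> ('s, 'a) traj \<Rightarrow> bool" where
  "valid_traj P \<tau> = (chain_from (fst \<tau>) (snd \<tau>) \<and> (\<forall>tr \<in> set (snd \<tau>). is_transition P tr))"

definition traj_start :: "('s, 'a) traj \<Rightarrow> 's" where
  "traj_start \<tau> = fst \<tau>"

definition traj_end :: "('s, 'a) traj \<Rightarrow> 's" where
  "traj_end \<tau> = (if snd \<tau> = [] then fst \<tau> else snd (snd (last (snd \<tau>))))"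

text \<open>Concatenation (meaningful when the first trajectory ends where the second starts).\<close>
definition traj_concat :: "('s, 'a) traj \<Rightarrow> ('s, 'a) traj \<Rightarrow> ('s, 'a) traj" where
  "traj_concat \<tau> \<tau>' = (fst \<tau>, snd \<tau> @ snd \<tau>')"

definition lottery :: "('s \<Rightarrow> 'a \<Rightarrow> 's pmf option) \<Rightarrow> ('s, 'a) traj pmf \<Rightarrow> bool" where
  "lottery P L = (\<forall>\<tau> \<in> set_pmf L. valid_traj P \<tau>)"

definition starts_from :: "('s, 'a) traj pmf \<Rightarrow> 's \<Rightarrow> bool" where
  "starts_from L s = (\<forall>\<tau> \<in> set_pmf L. traj_start \<tau> = s)"

definition mix :: "real \<Rightarrow> 'b pmf \<Rightarrow> 'b pmf \<Rightarrow> 'b pmf" where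
  "mix p L N = bind_pmf (bernoulli_pmf p) (\<lambda>b. if b then L else N)"

definition concat_lottery :: "('s, 'a) traj \<Rightarrow> ('s, 'a) traj pmf \<Rightarrow> ('s, 'a) traj pmf" where
  "concat_lottery \<tau> L = map_pmf (traj_concat \<tau>) L"

definition indiff :: "('b \<Rightarrow> 'b \<Rightarrow> bool) \<Rightarrow> 'b \<Rightarrow> 'b \<Rightarrow> bool" where
  "indiff R x y = (R x y \<and> R y x)"

definition vnm :: "('s \<Rightarrow> 'a \<Rightarrow> 's pmf option) \<Rightarrow> (('s, 'a) traj pmf \<Rightarrow> ('s, 'a) traj pmf \<Rightarrow> bool) \<Rightarrow> bool" where
  "vnm P R =
    ((\<forall>L M. lottery P L \<longrightarrow> lottery P M \<longrightarrow> R L M \<or> R M L) \<and>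
     (\<forall>L M N. lottery P L \<longrightarrow> lottery P M \<longrightarrow> lottery P N \<longrightarrow> R L M \<longrightarrow> R M N \<longrightarrow> R L N) \<and>
     (\<forall>L M N. lottery P L \<longrightarrow> lottery P M \<longrightarrow> lottery P N \<longrightarrow> R L M \<longrightarrow> R M N \<longrightarrow>
        (\<exists>p\<in>{0..1}. indiff R (mix p L N) M)) \<and>
     (\<forall>L M N p. lottery P L \<longrightarrow> lottery P M \<longrightarrow> lottery P N \<longrightarrow> 0 \<le> p \<longrightarrow> p < 1 \<longrightarrow>
        (R L M \<longleftrightarrow> R (mix (1 - p) L N) (mix (1 - p) M N))))"

definition additive :: "('s \<Rightarrow> 'a \<Rightarrow> 's pmf option) \<Rightarrow> (('s, 'a) traj pmf \<Rightarrow> ('s, 'a) traj pmf \<Rightarrow> bool) \<Rightarrow> bool" where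
  "additive P R =
    (\<forall>s \<tau>1 \<tau>2 L M N K p.
       valid_traj P \<tau>1 \<longrightarrow> valid_traj P \<tau>2 \<longrightarrow> traj_end \<tau>1 = s \<longrightarrow> traj_end \<tau>2 = s \<longrightarrow>
       lottery P L \<longrightarrow> lottery P M \<longrightarrow> starts_from L s \<longrightarrow> starts_from M s \<longrightarrow>
       lottery P N \<longrightarrow> lottery P K \<longrightarrow> 0 \<le> p \<longrightarrow> p \<le> 1 \<longrightarrow>
       (R (mix p (concat_lottery \<tau>1 L) N) (mix p (concat_lottery \<tau>1 M) K) \<longleftrightarrow>
        R (mix p (concat_lottery \<tau>2 L) N) (mix p (concat_lottery \<tau>2 M) K)))"

definition reachable :: "('s \<Rightarrow> 'a \<Rightarrow> 's pmf option) \<Rightarrow> 's \<Rightarrow> 's \<Rightarrow> bool" where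
  "reachable P s0 s = (\<exists>\<tau>. valid_traj P \<tau> \<and> traj_start \<tau> = s0 \<and> traj_end \<tau> = s)"

end

theory Submission
  imports Defs
begin

text \<open>Take a trajectory \<open>\<tau>\<close> from \<open>s\<^sub>0\<close> to \<open>s\<close>. Additivity with \<open>p = 1\<close>, comparing \<open>\<tau>\<close> with the
  empty trajectory \<open>\<epsilon>\<^sub>s\<close>, shows that prefixing \<open>\<tau>\<close> changes no preference between lotteries
  starting from \<open>s\<close>. The prefixed lotteries start from \<open>s\<^sub>0\<close>, where the two relations agree.\<close>

lemma chain_from_append:
  "chain_from s xs \<Longrightarrow> chain_from (traj_end (s, xs)) ys \<Longrightarrow> chain_from s (xs @ ys)"
proof (induction xs arbitrary: s)
  case Nil
  then show ?case by (simp add: traj_end_def)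
next
  case (Cons x xs)
  obtain s1 a s1' where "x = (s1, a, s1')"
    by (cases x) auto
  with Cons show ?case
    by (cases xs) (auto simp: traj_end_def)
qed

lemma valid_traj_concat:
  assumes "valid_traj P \<tau>" "valid_traj P \<tau>'" "traj_end \<tau> = traj_start \<tau>'"
  shows "valid_traj P (traj_concat \<tau> \<tau>')"
  using assms chain_from_append[of "fst \<tau>" "snd \<tau>" "snd \<tau>'"]
  by (auto simp: valid_traj_def traj_concat_def traj_start_def)

lemma lottery_concat_lottery:
  assumes "valid_traj P \<tau>" "lottery P L" "starts_from L (traj_end \<tau>)"
  shows "lottery P (concat_lottery \<tau> L)"
  using assms valid_traj_concat[of P \<tau>]
  by (auto simp: lottery_def starts_from_def concat_lottery_def)

lemma starts_from_concat_lottery: "starts_from (concat_lottery \<tau> L) (traj_start \<tau>)"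
  by (simp add: starts_from_def concat_lottery_def traj_start_def traj_concat_def)

lemma concat_lottery_empty:
  assumes "starts_from L s"
  shows "concat_lottery (s, []) L = L"
  unfolding concat_lottery_def
  by (rule map_pmf_idI) (use assms in \<open>auto simp: starts_from_def traj_start_def traj_concat_def\<close>)

lemma mix_1: "mix 1 L N = L"
proof -
  have "bernoulli_pmf 1 = return_pmf True"
    by (rule pmf_eqI) (simp split: split_indicator)
  then show ?thesis
    by (simp add: mix_def bind_return_pmf)
qed

lemma additive_concat_lottery_iff:
  assumes "additive P R" "valid_traj P \<tau>" "traj_end \<tau> = s"
    and "lottery P L" "lottery P M" "starts_from L s" "starts_from M s"
  shows "R (concat_lottery \<tau> L) (concat_lottery \<tau> M) \<longleftrightarrow> R L M"
proof -
  have "valid_traj P (s, [])" "traj_end (s, []) = s"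
    by (simp_all add: valid_traj_def traj_end_def)
  then have "R (mix 1 (concat_lottery \<tau> L) L) (mix 1 (concat_lottery \<tau> M) M) \<longleftrightarrow>
      R (mix 1 (concat_lottery (s, []) L) L) (mix 1 (concat_lottery (s, []) M) M)"
    using assms(2-7) by (intro assms(1)[unfolded additive_def, rule_format]) simp_all
  with assms(6,7) show ?thesis
    by (simp add: mix_1 concat_lottery_empty)
qed

theorem proposition3:
  fixes P :: "'s::countable \<Rightarrow> 'a \<Rightarrow> 's pmf option"
    and T :: "'s \<Rightarrow> 'a \<Rightarrow> 's \<Rightarrow> real"
    and s0 :: 's
    and R1 R2 :: "('s, 'a) traj pmf \<Rightarrow> ('s, 'a) traj pmf \<Rightarrow> bool"
  assumes "cmp P T"
    and "vnm P R1" and "additive P R1"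
    and "vnm P R2" and "additive P R2"
    and agree0: "\<forall>L M. lottery P L \<longrightarrow> lottery P M \<longrightarrow> starts_from L s0 \<longrightarrow> starts_from M s0 \<longrightarrow>
                  (R1 L M \<longleftrightarrow> R2 L M)"
  shows "\<forall>s L M. reachable P s0 s \<longrightarrow> lottery P L \<longrightarrow> lottery P M \<longrightarrow>
           starts_from L s \<longrightarrow> starts_from M s \<longrightarrow> (R1 L M \<longleftrightarrow> R2 L M)"
proof (intro allI impI)
  fix s L M
  assume "reachable P s0 s" and lotteries: "lottery P L" "lottery P M"
    and starts: "starts_from L s" "starts_from M s"
  then obtain \<tau> where \<tau>: "valid_traj P \<tau>" "traj_start \<tau> = s0" "traj_end \<tau> = s"
    unfolding reachable_def by blast
  have "lottery P (concat_lottery \<tau> L)" "lottery P (concat_lottery \<tau> M)"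
    using \<tau> lotteries starts by (simp_all add: lottery_concat_lottery)
  moreover have "starts_from (concat_lottery \<tau> L) s0" "starts_from (concat_lottery \<tau> M) s0"
    using \<tau>(2) starts_from_concat_lottery by blast+
  ultimately have "R1 (concat_lottery \<tau> L) (concat_lottery \<tau> M) \<longleftrightarrow>
      R2 (concat_lottery \<tau> L) (concat_lottery \<tau> M)"
    using agree0 by blast
  then show "R1 L M \<longleftrightarrow> R2 L M"
    using additive_concat_lottery_iff[OF \<open>additive P R1\<close> \<tau>(1,3) lotteries starts]
      additive_concat_lottery_iff[OF \<open>additive P R2\<close> \<tau>(1,3) lotteries starts]
    by simp
qed

end
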